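(* Let $G$ be a graph and $W$ a walk of $G$. Let $E_o$ be the set of edges traversed by $W$ an odd number of times and $E_e$ the set of edges traversed by $W$ a non-zero even number of times. Then $W$ is equivalent to a walk $W_S$ that follows a walk $S$ of $G$ in which each edge of $E_o$ appears exactly once and each edge of $E_e$ appears at most twice.
   Context: A walk of a graph $G$ is a sequence of vertices $u_0u_1\dots u_l$ with $u_tu_{t+1}\in E(G)$ for all $t$ (vertices and edges may repeat). A walk $W'$ follows the walk $W=u_0\dots u_l$ if there are non-negative integers $i_0,\dots,i_{l-1}$ such that $W'=u_0(u_1u_0)^{i_0}u_1(u_2u_1)^{i_1}\dots u_{l-1}(u_lu_{l-1})^{i_{l-1}}u_l$, where $(u_{t+1}u_t)^{i}$ denotes $i$ successive half-turns (going from $u_t$ to $u_{t+1}$ and back) inserted after $u_t$; i.e., $W'$ is obtained by traversing $W$ from start to end and inserting half-turns $u_{t+1}u_tu_{t+1}$ along the edges. Two walks are equivalent if their multisets of traversed edges are equal. *)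

theory Defs
  imports Main "HOL-Library.Multiset"
begin

definition graph :: "'a set \<Rightarrow> 'a set set \<Rightarrow> bool" where
  "graph V E \<longleftrightarrow> (\<forall>e\<in>E. e \<subseteq> V \<and> card e = 2)"

definition walk :: "'a set \<Rightarrow> 'a set set \<Rightarrow> 'a list \<Rightarrow> bool" where
  "walk V E W \<longleftrightarrow> W \<noteq> [] \<and> set W \<subseteq> V \<and>
     (\<forall>i. Suc i < length W \<longrightarrow> {W ! i, W ! Suc i} \<in> E)"

definition walk_edges :: "'a list \<Rightarrow> 'a set multiset" where
  "walk_edges W = mset (map (\<lambda>(u, v). {u, v}) (zip W (tl W)))"

text \<open>expand W is: u_0 (u_1 u_0)^{i_0} u_1 (u_2 u_1)^{i_1} ... u_l\<close>
fun expand :: "'a list \<Rightarrow> nat list \<Rightarrow> 'a list" where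
  "expand (u # v # rest) (i # is) = u # concat (replicate i [v, u]) @ expand (v # rest) is"
| "expand W is = W"

definition follows :: "'a list \<Rightarrow> 'a list \<Rightarrow> bool" where
  "follows W' W \<longleftrightarrow> (\<exists>is. length is = length W - 1 \<and> W' = expand W is)"

definition equivalent :: "'a list \<Rightarrow> 'a list \<Rightarrow> bool" where
  "equivalent W1 W2 \<longleftrightarrow> walk_edges W1 = walk_edges W2"

end

theory Submission
  imports Defs
begin

text \<open>If an edge \<open>{x, y}\<close> is traversed at least three times, one of its two directions,
  say from \<open>x\<close> to \<open>y\<close>, is traversed twice, so the walk reads \<open>P x y Q x y R\<close>. Then
  \<open>P x (rev Q) y R\<close> is again a walk on the same vertices and edges, traversing \<open>{x, y}\<close> twice
  less and every other edge equally often. Iterating gives a walk \<open>S\<close> using every edge at most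
  twice, whose edge multiset differs from that of \<open>W\<close> by \<open>2M\<close> with \<open>M\<close> supported on the edges
  of \<open>S\<close>. Parities are unchanged, so an edge traversed an odd number of times by \<open>W\<close> appears
  exactly once in \<open>S\<close>. Finally the removed pairs come back as half-turns: inserting
  \<open>count M e\<close> half-turns at the first traversal of each edge \<open>e\<close> of \<open>S\<close> yields a walk that
  follows \<open>S\<close> and is equivalent to \<open>W\<close>.\<close>

fun arcs :: "'a list \<Rightarrow> ('a \<times> 'a) list" where
  "arcs (u # v # T) = (u, v) # arcs (v # T)"
| "arcs _ = []"

lemma walk_edges_Nil [simp]: "walk_edges [] = {#}"
  and walk_edges_single [simp]: "walk_edges [u] = {#}"
  and walk_edges_Cons_Cons [simp]: "walk_edges (u # v # T) = add_mset {u, v} (walk_edges (v # T))"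
  by (simp_all add: walk_edges_def)

lemma walk_edges_append_Cons:
  "walk_edges (A @ x # B) = walk_edges (A @ [x]) + walk_edges (x # B)"
  by (induction A rule: arcs.induct) auto

lemma walk_edges_rev: "walk_edges (rev S) = walk_edges S"
proof (induction S rule: arcs.induct)
  case (1 u v T)
  have "walk_edges (rev (u # v # T)) = walk_edges (rev T @ [v]) + walk_edges [v, u]"
    using walk_edges_append_Cons[of "rev T" v "[u]"] by simp
  then show ?case
    using 1 by (simp add: insert_commute)
qed auto

lemma set_zip_tl: "set (zip S (tl S)) = {(S ! i, S ! Suc i) | i. Suc i < length S}"
  by (force simp: set_zip nth_tl)

lemma set_walk_edges: "set_mset (walk_edges S) = {{S ! i, S ! Suc i} | i. Suc i < length S}"
  unfolding walk_edges_def set_mset_mset set_map set_zip_tl by auto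

lemma walk_iff_walk_edges:
  "walk V E S \<longleftrightarrow> S \<noteq> [] \<and> set S \<subseteq> V \<and> set_mset (walk_edges S) \<subseteq> E"
  unfolding walk_def set_walk_edges by blast

lemma count_walk_edges_arcs:
  assumes "a \<noteq> b"
  shows "count (walk_edges S) {a, b} = count (mset (arcs S)) (a, b) + count (mset (arcs S)) (b, a)"
  using assms by (induction S rule: arcs.induct) (auto simp: doubleton_eq_iff)

lemma arcs_decomp:
  assumes "(x, y) \<in> set (arcs S)"
  shows "\<exists>P R. S = P @ x # y # R"
  using assms
proof (induction S rule: arcs.induct)
  case (1 u v T)
  show ?case
  proof (cases "(u, v) = (x, y)")
    case True
    then show ?thesis by auto
  next
    case False
    then obtain P R where "v # T = P @ x # y # R"
      using 1 by auto
    then have "u # v # T = (u # P) @ x # y # R" by simp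
    then show ?thesis by blast
  qed
qed auto

lemma arcs_decomp_twice:
  assumes "count (mset (arcs S)) (x, y) \<ge> 2" and "x \<noteq> y"
  shows "\<exists>P Q R. S = P @ x # y # Q @ x # y # R"
  using assms
proof (induction S rule: arcs.induct)
  case (1 u v T)
  show ?case
  proof (cases "(u, v) = (x, y)")
    case True
    then have "(x, y) \<in> set (arcs (v # T))"
      using 1(2) by (auto simp flip: set_mset_mset)
    then obtain P R where PR: "v # T = P @ x # y # R"
      using arcs_decomp by metis
    with True \<open>x \<noteq> y\<close> obtain Q where "P = y # Q"
      by (cases P) auto
    with PR True have "u # v # T = [] @ x # y # Q @ x # y # R" by simp
    then show ?thesis by blast
  next
    case False
    then obtain P Q R where "v # T = P @ x # y # Q @ x # y # R"
      using 1 by auto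
    then have "u # v # T = (u # P) @ x # y # Q @ x # y # R" by simp
    then show ?thesis by blast
  qed
qed auto

lemma walk_edges_shortcut:
  "walk_edges (P @ x # y # Q @ x # y # R)
    = walk_edges (P @ x # rev Q @ y # R) + {#{x, y}, {x, y}#}"
proof -
  have "walk_edges (x # y # Q @ x # y # R)
      = add_mset {x, y} (walk_edges (y # Q @ [x]) + walk_edges (x # y # R))"
    using walk_edges_append_Cons[of "y # Q" x "y # R"] by simp
  moreover have "walk_edges (x # rev Q @ y # R) = walk_edges (y # Q @ [x]) + walk_edges (y # R)"
    using walk_edges_append_Cons[of "x # rev Q" y R] walk_edges_rev[of "y # Q @ [x]"] by simp
  ultimately show ?thesis
    using walk_edges_append_Cons[of P x "y # Q @ x # y # R"]
      walk_edges_append_Cons[of P x "rev Q @ y # R"] by simp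
qed

lemma walk_shortcut:
  assumes "graph V E" and "walk V E S" and "count (walk_edges S) e \<ge> 3"
  obtains S' where "walk V E S'" and "walk_edges S = walk_edges S' + {#e, e#}"
proof -
  have "e \<in># walk_edges S"
    using assms(3) by (simp add: Suc_le_lessD flip: count_greater_zero_iff)
  then have "e \<in> E"
    using assms(2) by (auto simp: walk_iff_walk_edges)
  then obtain a b where e: "e = {a, b}" and "a \<noteq> b"
    using assms(1) by (auto simp: graph_def card_2_iff)
  have "count (mset (arcs S)) (a, b) \<ge> 2 \<or> count (mset (arcs S)) (b, a) \<ge> 2"
    using count_walk_edges_arcs[OF \<open>a \<noteq> b\<close>, of S] assms(3) unfolding e by linarith
  then obtain x y where xy: "e = {x, y}" and "x \<noteq> y" and "count (mset (arcs S)) (x, y) \<ge> 2"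
  proof
    show "count (mset (arcs S)) (a, b) \<ge> 2 \<Longrightarrow> thesis"
      using that e \<open>a \<noteq> b\<close> by blast
    show "count (mset (arcs S)) (b, a) \<ge> 2 \<Longrightarrow> thesis"
      using that[of b a] e \<open>a \<noteq> b\<close> by (simp add: insert_commute)
  qed
  from arcs_decomp_twice[OF this(3,2)] obtain P Q R where S: "S = P @ x # y # Q @ x # y # R"
    by blast
  define S' where "S' = P @ x # rev Q @ y # R"
  have edges: "walk_edges S = walk_edges S' + {#e, e#}"
    unfolding S S'_def xy by (rule walk_edges_shortcut)
  have "set S' \<subseteq> set S" and "S' \<noteq> []"
    by (auto simp: S S'_def)
  moreover have "set_mset (walk_edges S') \<subseteq> set_mset (walk_edges S)"
    using edges by auto
  ultimately have "walk V E S'"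
    using assms(2) unfolding walk_iff_walk_edges by blast
  with edges show thesis
    using that by blast
qed

lemma walk_reduce_multiplicities:
  assumes "graph V E" and "walk V E W"
  obtains S M where "walk V E S" and "walk_edges W = walk_edges S + M + M"
    and "set_mset (walk_edges S) = set_mset (walk_edges W)"
    and "\<And>e. count (walk_edges S) e \<le> 2"
proof -
  have "\<exists>S M. walk V E S \<and> walk_edges W = walk_edges S + M + M
      \<and> set_mset (walk_edges S) = set_mset (walk_edges W) \<and> (\<forall>e. count (walk_edges S) e \<le> 2)"
    using assms(2)
  proof (induction "size (walk_edges W)" arbitrary: W rule: less_induct)
    case less
    show ?case
    proof (cases "\<forall>e. count (walk_edges W) e \<le> 2")
      case True
      then show ?thesis
        using less.prems by (intro exI[of _ W] exI[of _ "{#}"]) simp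
    next
      case False
      then obtain e where "\<not> count (walk_edges W) e \<le> 2"
        by blast
      then have "count (walk_edges W) e \<ge> 3"
        by linarith
      then obtain W' where "walk V E W'" and W': "walk_edges W = walk_edges W' + {#e, e#}"
        using walk_shortcut[OF assms(1) less.prems] by blast
      then obtain S M where S: "walk V E S" "walk_edges W' = walk_edges S + M + M"
        "set_mset (walk_edges S) = set_mset (walk_edges W')" "\<forall>e. count (walk_edges S) e \<le> 2"
        using less.hyps[of W'] by (auto simp: W')
      have "e \<in># walk_edges W'"
        using W' \<open>count (walk_edges W) e \<ge> 3\<close> by (simp flip: count_greater_zero_iff)
      then have "set_mset (walk_edges S) = set_mset (walk_edges W)"
        using S(3) W' by (simp add: insert_absorb)
      moreover have "walk_edges W = walk_edges S + add_mset e M + add_mset e M"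
        using S(2) W' by simp
      ultimately show ?thesis
        using S(1,4) by blast
    qed
  qed
  then show thesis
    using that by blast
qed

lemma walk_edges_half_turns:
  "walk_edges (u # concat (replicate i [v, u]) @ v # X)
    = replicate_mset (2 * i) {u, v} + walk_edges (u # v # X)"
  by (induction i) (simp_all add: insert_commute)

lemma expand_ConsE:
  obtains X where "expand (v # T) is = v # X"
  by (cases "(v # T, is)" rule: expand.cases) auto

lemma expand_adds_half_turns:
  assumes "set_mset M \<subseteq> set_mset (walk_edges S)"
  shows "\<exists>is. length is = length S - 1 \<and> walk_edges (expand S is) = walk_edges S + M + M"
  using assms
proof (induction S arbitrary: M rule: arcs.induct)
  case (1 u v T)
  define M' where "M' = filter_mset (\<lambda>e. e \<noteq> {u, v}) M"
  have "set_mset M' \<subseteq> set_mset (walk_edges (v # T))"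
    using "1.prems" by (auto simp: M'_def)
  then obtain "is" where "length is = length T"
    and IH: "walk_edges (expand (v # T) is) = walk_edges (v # T) + M' + M'"
    using "1.IH" by auto
  obtain X where X: "expand (v # T) is = v # X"
    by (rule expand_ConsE)
  have "walk_edges (expand (u # v # T) (count M {u, v} # is))
      = replicate_mset (2 * count M {u, v}) {u, v} + add_mset {u, v} (walk_edges (v # T) + M' + M')"
    using IH X by (simp add: walk_edges_half_turns)
  also have "\<dots> = walk_edges (u # v # T) + M + M"
    by (simp add: M'_def multiset_eq_iff)
  finally show ?case
    using \<open>length is = length T\<close> by (intro exI[of _ "count M {u, v} # is"]) simp
qed auto

theorem proposition4p4:
  fixes V :: "'a set" and E :: "'a set set" and W :: "'a list"
  assumes "graph V E" and "walk V E W"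
  shows "\<exists>S WS. walk V E S \<and> follows WS S \<and> equivalent W WS \<and>
     (\<forall>e. odd (count (walk_edges W) e) \<longrightarrow> count (walk_edges S) e = 1) \<and>
     (\<forall>e. count (walk_edges W) e \<noteq> 0 \<and> even (count (walk_edges W) e)
            \<longrightarrow> count (walk_edges S) e \<le> 2)"
proof -
  obtain S M where "walk V E S" and W: "walk_edges W = walk_edges S + M + M"
    and edges: "set_mset (walk_edges S) = set_mset (walk_edges W)"
    and le2: "\<And>e. count (walk_edges S) e \<le> 2"
    using walk_reduce_multiplicities[OF assms] by blast
  have "set_mset M \<subseteq> set_mset (walk_edges S)"
    using W edges by auto
  from expand_adds_half_turns[OF this] obtain "is"
    where "length is = length S - 1" and "walk_edges (expand S is) = walk_edges W"
    unfolding W by blast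
  then have "follows (expand S is) S" and "equivalent W (expand S is)"
    by (auto simp: follows_def equivalent_def)
  moreover have "count (walk_edges S) e = 1" if "odd (count (walk_edges W) e)" for e
  proof -
    have "count (walk_edges W) e = count (walk_edges S) e + 2 * count M e"
      using W by simp
    then show ?thesis
      using that le2[of e] by presburger
  qed
  ultimately show ?thesis
    using \<open>walk V E S\<close> le2 by blast
qed

end
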